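(* A ranked poset is (isomorphic to) a nice section if and only if it is a two-element antichain or a 6-stack. Consequently, a ranked poset is (isomorphic to) a tower of nice sections if and only if it is a 6-tower.
   Context: All posets are finite. For a poset $P$ and $p\in P$, the rank $r(p)$ of $p$ is the largest $m$ such that there is a chain $p_0<\dots<p_m=p$ in $P$. $P$ is ranked of rank $r(P)$ if every maximal chain has exactly $r(P)+1$ elements. For $0\le i\le j$, $P(i,j)=\{p\in P:i\le r(p)\le j\}$, $P(i)=P(i,i)$ (induced order). The ordinal sum of posets $P_1,\dots,P_k$ ($k\ge1$) is their disjoint union ordered by the orders of the $P_i$ together with $p<q$ whenever $p\in P_i,q\in P_j,i<j$. The 6-crown $C_6$ is the poset on $\{x_0,x_1,x_2,y_0,y_1,y_2\}$ whose only strict comparabilities are $x_0<y_0>x_1<y_1>x_2<y_2>x_0$. A 6-stack is a ranked poset $P$ of rank $n\ge1$ such that $P(i,i+1)\cong C_6$ for each $0\le i<n$. A 6-tower is an ordinal sum of one or more posets each of which is a two-element antichain or a 6-stack. A section is either a two-element antichain or a poset on the set $\{[i,k]: 0\le i\le 2,\ 0\le k\le n\}$ (with $3(n+1)$ distinct elements), for some $n\ge 1$, such that: (1) $[i,k]<[i,l]$ whenever $0\le i\le 2$ and $0\le k<l\le n$; (2) for each $k$, $\{[0,k],[1,k],[2,k]\}$ is an antichain; (3) for all $i,j,k,l$, $[i,k]<[j,l]$ implies $[i+1,k]<[j+1,l]$ (first indices mod $3$); (4) for each $0\le k<n$ there are $i,j\in\{0,1,2\}$ with $[i,k]\not<[j,k+1]$.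 A section $P$ is nice if for all $p<q$ in $P$ there exist $r,s\in P$ with $p<r$, $q\not<r$, and $s<q$, $s\not<p$. A tower of (nice) sections is an ordinal sum of one or more (nice) sections. *)

theory Defs
  imports Main
begin

definition is_poset :: "'a set \<Rightarrow> ('a \<Rightarrow> 'a \<Rightarrow> bool) \<Rightarrow> bool" where
  "is_poset A lt \<longleftrightarrow> finite A \<and> (\<forall>x\<in>A. \<not> lt x x) \<and>
     (\<forall>x\<in>A. \<forall>y\<in>A. \<forall>z\<in>A. lt x y \<longrightarrow> lt y z \<longrightarrow> lt x z)"

definition poset_iso :: "'a set \<Rightarrow> ('a \<Rightarrow> 'a \<Rightarrow> bool) \<Rightarrow> 'b set \<Rightarrow> ('b \<Rightarrow> 'b \<Rightarrow> bool) \<Rightarrow> bool" where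
  "poset_iso A lt B lt' \<longleftrightarrow> (\<exists>f. bij_betw f A B \<and> (\<forall>x\<in>A. \<forall>y\<in>A. lt x y \<longleftrightarrow> lt' (f x) (f y)))"

definition prank :: "'a set \<Rightarrow> ('a \<Rightarrow> 'a \<Rightarrow> bool) \<Rightarrow> 'a \<Rightarrow> nat" where
  "prank A lt p = (GREATEST m. \<exists>f. f m = p \<and> (\<forall>i\<le>m. f i \<in> A) \<and> (\<forall>i<m. lt (f i) (f (Suc i))))"

definition is_chain :: "'a set \<Rightarrow> ('a \<Rightarrow> 'a \<Rightarrow> bool) \<Rightarrow> 'a set \<Rightarrow> bool" where
  "is_chain A lt C \<longleftrightarrow> C \<subseteq> A \<and> (\<forall>x\<in>C. \<forall>y\<in>C. x = y \<or> lt x y \<or> lt y x)"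

definition is_maxchain :: "'a set \<Rightarrow> ('a \<Rightarrow> 'a \<Rightarrow> bool) \<Rightarrow> 'a set \<Rightarrow> bool" where
  "is_maxchain A lt C \<longleftrightarrow> is_chain A lt C \<and> (\<forall>D. is_chain A lt D \<and> C \<subseteq> D \<longrightarrow> D = C)"

definition ranked_of :: "'a set \<Rightarrow> ('a \<Rightarrow> 'a \<Rightarrow> bool) \<Rightarrow> nat \<Rightarrow> bool" where
  "ranked_of A lt n \<longleftrightarrow> (\<forall>C. is_maxchain A lt C \<longrightarrow> card C = n + 1)"

definition ranked :: "'a set \<Rightarrow> ('a \<Rightarrow> 'a \<Rightarrow> bool) \<Rightarrow> bool" where
  "ranked A lt \<longleftrightarrow> (\<exists>n. ranked_of A lt n)"

text \<open>P(i,j) (carrier; the order is the restriction of lt)\<close>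
definition rank_slice :: "'a set \<Rightarrow> ('a \<Rightarrow> 'a \<Rightarrow> bool) \<Rightarrow> nat \<Rightarrow> nat \<Rightarrow> 'a set" where
  "rank_slice A lt i j = {p\<in>A. i \<le> prank A lt p \<and> prank A lt p \<le> j}"

text \<open>The 6-crown: x_i = i, y_i = 3 + i\<close>
definition crown6_carrier :: "nat set" where
  "crown6_carrier = {0,1,2,3,4,5}"

definition crown6_lt :: "nat \<Rightarrow> nat \<Rightarrow> bool" where
  "crown6_lt a b \<longleftrightarrow> (a, b) \<in> {(0,3),(1,3),(1,4),(2,4),(2,5),(0,5)}"

definition two_antichain :: "'a set \<Rightarrow> ('a \<Rightarrow> 'a \<Rightarrow> bool) \<Rightarrow> bool" where
  "two_antichain A lt \<longleftrightarrow> card A = 2 \<and> (\<forall>x\<in>A. \<forall>y\<in>A. \<not> lt x y)"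

definition six_stack :: "'a set \<Rightarrow> ('a \<Rightarrow> 'a \<Rightarrow> bool) \<Rightarrow> bool" where
  "six_stack A lt \<longleftrightarrow> (\<exists>n\<ge>1. ranked_of A lt n \<and>
     (\<forall>i<n. poset_iso (rank_slice A lt i (Suc i)) lt crown6_carrier crown6_lt))"

definition osum_carrier :: "('b set \<times> ('b \<Rightarrow> 'b \<Rightarrow> bool)) list \<Rightarrow> (nat \<times> 'b) set" where
  "osum_carrier Ps = {(j, x). j < length Ps \<and> x \<in> fst (Ps ! j)}"

definition osum_lt :: "('b set \<times> ('b \<Rightarrow> 'b \<Rightarrow> bool)) list \<Rightarrow> nat \<times> 'b \<Rightarrow> nat \<times> 'b \<Rightarrow> bool" where
  "osum_lt Ps p q \<longleftrightarrow> fst p < fst q \<or> (fst p = fst q \<and> snd (Ps ! fst p) (snd p) (snd q))"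

definition six_tower :: "'a set \<Rightarrow> ('a \<Rightarrow> 'a \<Rightarrow> bool) \<Rightarrow> bool" where
  "six_tower A lt \<longleftrightarrow> (\<exists>Ps :: ('a set \<times> ('a \<Rightarrow> 'a \<Rightarrow> bool)) list. Ps \<noteq> [] \<and>
     (\<forall>P\<in>set Ps. is_poset (fst P) (snd P) \<and>
        (two_antichain (fst P) (snd P) \<or> six_stack (fst P) (snd P))) \<and>
     poset_iso A lt (osum_carrier Ps) (osum_lt Ps))"

text \<open>Sections; [i,k] is represented by the pair (i,k)\<close>
definition is_section :: "(nat \<times> nat) set \<Rightarrow> (nat \<times> nat \<Rightarrow> nat \<times> nat \<Rightarrow> bool) \<Rightarrow> bool" where
  "is_section A lt \<longleftrightarrow> is_poset A lt \<and>
    (two_antichain A lt \<or>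
     (\<exists>n\<ge>1. A = {0..2} \<times> {0..n} \<and>
        (\<forall>i\<le>2. \<forall>k l. k < l \<and> l \<le> n \<longrightarrow> lt (i,k) (i,l)) \<and>
        (\<forall>k\<le>n. \<forall>i\<le>2. \<forall>j\<le>2. \<not> lt (i,k) (j,k)) \<and>
        (\<forall>i\<le>2. \<forall>j\<le>2. \<forall>k\<le>n. \<forall>l\<le>n. lt (i,k) (j,l) \<longrightarrow>
            lt ((i+1) mod 3, k) ((j+1) mod 3, l)) \<and>
        (\<forall>k<n. \<exists>i\<le>2. \<exists>j\<le>2. \<not> lt (i,k) (j, Suc k))))"

definition is_nice :: "'a set \<Rightarrow> ('a \<Rightarrow> 'a \<Rightarrow> bool) \<Rightarrow> bool" where
  "is_nice A lt \<longleftrightarrow> (\<forall>p\<in>A. \<forall>q\<in>A. lt p q \<longrightarrow>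
     (\<exists>r\<in>A. lt p r \<and> \<not> (q = r \<or> lt q r)) \<and> (\<exists>s\<in>A. lt s q \<and> \<not> (s = p \<or> lt s p)))"

definition nice_section :: "(nat \<times> nat) set \<Rightarrow> (nat \<times> nat \<Rightarrow> nat \<times> nat \<Rightarrow> bool) \<Rightarrow> bool" where
  "nice_section A lt \<longleftrightarrow> is_section A lt \<and> is_nice A lt"

end

theory Submission
  imports Defs
begin

text \<open>In a section on the grid {0..2} \<times> {0..n}, the rotation symmetry reduces the relations
  between levels k and k+1 to the two cross relations (0,k) < (1,k+1) and (0,k) < (2,k+1).
  Condition (4) excludes both, niceness together with rankedness excludes neither, and exactly one
  of them makes the two levels a 6-crown. Conversely, in a 6-stack each level has three elements
  and, crown by crown, each element of level k+1 covers exactly two of level k; labelling the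
  levels by 0, 1, 2 accordingly identifies every 6-stack of rank n with one standard nice section.
  The statement about towers follows because rankedness passes to the summands of an ordinal sum
  of nonempty posets.\<close>

section \<open>Ranks and maximal chains\<close>

definition chain_to :: "'a set \<Rightarrow> ('a \<Rightarrow> 'a \<Rightarrow> bool) \<Rightarrow> nat \<Rightarrow> 'a \<Rightarrow> bool" where
  "chain_to A lt m p \<longleftrightarrow> (\<exists>f. f m = p \<and> (\<forall>i\<le>m. f i \<in> A) \<and> (\<forall>i<m. lt (f i) (f (Suc i))))"

lemma prank_chain_to: "prank A lt p = (GREATEST m. chain_to A lt m p)"
  unfolding prank_def chain_to_def by simp

lemma is_posetD:
  assumes "is_poset A lt"
  shows "finite A" and "x \<in> A \<Longrightarrow> \<not> lt x x"
    and "x \<in> A \<Longrightarrow> y \<in> A \<Longrightarrow> z \<in> A \<Longrightarrow> lt x y \<Longrightarrow> lt y z \<Longrightarrow> lt x z"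
  using assms unfolding is_poset_def by blast+

lemma is_poset_subset: "is_poset A lt \<Longrightarrow> S \<subseteq> A \<Longrightarrow> is_poset S lt"
  unfolding is_poset_def by (meson finite_subset subsetD)

lemma chain_seq_lt:
  assumes P: "is_poset A lt" and f: "\<forall>i\<le>m. f i \<in> A" "\<forall>i<m. lt (f i) (f (Suc i))"
    and "i < j" "j \<le> m"
  shows "lt (f i) (f j)"
  using assms(4,5)
proof (induction j)
  case (Suc j)
  then show ?case
    using f is_posetD(3)[OF P, of "f i" "f j" "f (Suc j)"] by (cases "i = j") auto
qed simp

lemma chain_seq_image:
  assumes P: "is_poset A lt" and f: "\<forall>i\<le>m. f i \<in> A" "\<forall>i<m. lt (f i) (f (Suc i))"
  shows "is_chain A lt (f ` {0..m})" and "card (f ` {0..m}) = Suc m"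
proof -
  have cmp: "f i = f j \<or> lt (f i) (f j) \<or> lt (f j) (f i)" if "i \<le> m" "j \<le> m" for i j
    using chain_seq_lt[OF P f] that by (cases i j rule: linorder_cases) auto
  show "is_chain A lt (f ` {0..m})"
    unfolding is_chain_def using f cmp by auto
  have "inj_on f {0..m}"
  proof (rule inj_onI, rule ccontr)
    fix i j assume "i \<in> {0..m}" "j \<in> {0..m}" "f i = f j" "i \<noteq> j"
    then show False
      using chain_seq_lt[OF P f, of i j] chain_seq_lt[OF P f, of j i] f is_posetD(2)[OF P]
      by (cases i j rule: linorder_cases) auto
  qed
  then show "card (f ` {0..m}) = Suc m" by (simp add: card_image)
qed

lemma chain_to_less_card:
  assumes P: "is_poset A lt" and "chain_to A lt m p"
  shows "m < card A"
proof -
  obtain f where f: "\<forall>i\<le>m. f i \<in> A" "\<forall>i<m. lt (f i) (f (Suc i))"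
    using assms(2) unfolding chain_to_def by blast
  have "card (f ` {0..m}) \<le> card A"
    using chain_seq_image(1)[OF P f] is_posetD(1)[OF P] by (intro card_mono) (auto simp: is_chain_def)
  then show ?thesis using chain_seq_image(2)[OF P f] by simp
qed

lemma chain_to_0: "p \<in> A \<Longrightarrow> chain_to A lt 0 p"
  unfolding chain_to_def by (rule exI[of _ "\<lambda>_. p"]) simp

lemma chain_to_prank:
  assumes "is_poset A lt" and "p \<in> A"
  shows "chain_to A lt (prank A lt p) p"
  unfolding prank_chain_to
  by (rule GreatestI_nat[of _ 0 "card A"])
    (use chain_to_0[OF assms(2)] chain_to_less_card[OF assms(1)] in \<open>auto simp: less_imp_le\<close>)

lemma prank_ge:
  assumes "is_poset A lt" and "chain_to A lt m p"
  shows "m \<le> prank A lt p"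
  unfolding prank_chain_to
  by (rule Greatest_le_nat[of _ _ "card A"])
    (use assms chain_to_less_card[OF assms(1)] in \<open>auto simp: less_imp_le\<close>)

lemma chain_to_snoc:
  assumes "chain_to A lt m p" and "q \<in> A" and "lt p q"
  shows "chain_to A lt (Suc m) q"
proof -
  obtain f where f: "f m = p" "\<forall>i\<le>m. f i \<in> A" "\<forall>i<m. lt (f i) (f (Suc i))"
    using assms(1) unfolding chain_to_def by blast
  have "(f(Suc m := q)) (Suc m) = q" "\<forall>i\<le>Suc m. (f(Suc m := q)) i \<in> A"
    "\<forall>i<Suc m. lt ((f(Suc m := q)) i) ((f(Suc m := q)) (Suc i))"
    using f assms by (auto simp: le_Suc_eq less_Suc_eq)
  then show ?thesis unfolding chain_to_def by blast
qed

lemma prank_less: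
  assumes P: "is_poset A lt" and "p \<in> A" "q \<in> A" "lt p q"
  shows "prank A lt p < prank A lt q"
  using prank_ge[OF P chain_to_snoc[OF chain_to_prank[OF P \<open>p \<in> A\<close>] \<open>q \<in> A\<close> \<open>lt p q\<close>]]
  by simp

lemma prank_Suc_lower:
  assumes P: "is_poset A lt" and p: "p \<in> A" and r: "prank A lt p = Suc k"
  shows "\<exists>q\<in>A. lt q p \<and> prank A lt q = k"
proof -
  obtain f where f: "f (Suc k) = p" "\<forall>i\<le>Suc k. f i \<in> A" "\<forall>i<Suc k. lt (f i) (f (Suc i))"
    using chain_to_prank[OF P p] r unfolding chain_to_def by auto
  have "chain_to A lt k (f k)"
    unfolding chain_to_def using f by (intro exI[of _ f]) auto
  then have "k \<le> prank A lt (f k)" by (rule prank_ge[OF P])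
  moreover have "f k \<in> A" "lt (f k) p" using f by auto
  moreover have "prank A lt (f k) < Suc k" using prank_less[OF P \<open>f k \<in> A\<close> p \<open>lt (f k) p\<close>] r by simp
  ultimately show ?thesis by (intro bexI[of _ "f k"]) auto
qed

lemma maxchain_extends:
  assumes "finite A" and "is_chain A lt C"
  shows "\<exists>M. is_maxchain A lt M \<and> C \<subseteq> M"
proof -
  define S where "S = {D. is_chain A lt D \<and> C \<subseteq> D}"
  have "S \<subseteq> Pow A" unfolding S_def is_chain_def by auto
  then have "finite S" using assms(1) by (meson finite_Pow_iff finite_subset)
  moreover have "C \<in> S" using assms(2) unfolding S_def by auto
  ultimately have "Max (card ` S) \<in> card ` S" by (intro Max_in) auto
  then obtain M where "M \<in> S" "card M = Max (card ` S)" by auto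
  then have M: "M \<in> S" "\<forall>D\<in>S. card D \<le> card M" using \<open>finite S\<close> by simp_all
  have "D = M" if "is_chain A lt D" "M \<subseteq> D" for D
  proof -
    have "D \<in> S" "finite D" using that M(1) assms(1) finite_subset unfolding S_def is_chain_def by auto
    then show ?thesis using M(2) that(2) by (metis card_seteq)
  qed
  then show ?thesis using M(1) unfolding S_def is_maxchain_def by auto
qed

lemma prank_le_rank:
  assumes P: "is_poset A lt" and R: "ranked_of A lt n" and p: "p \<in> A"
  shows "prank A lt p \<le> n"
proof -
  obtain f where f: "\<forall>i\<le>prank A lt p. f i \<in> A" "\<forall>i<prank A lt p. lt (f i) (f (Suc i))"
    using chain_to_prank[OF P p] unfolding chain_to_def by blast
  obtain M where M: "is_maxchain A lt M" "f ` {0..prank A lt p} \<subseteq> M"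
    using maxchain_extends[OF is_posetD(1)[OF P] chain_seq_image(1)[OF P f]] by blast
  have "finite M" using M(1) is_posetD(1)[OF P] finite_subset unfolding is_maxchain_def is_chain_def by auto
  then have "Suc (prank A lt p) \<le> card M" using card_mono[OF _ M(2)] chain_seq_image(2)[OF P f] by simp
  then show ?thesis using R M(1) unfolding ranked_of_def by auto
qed

lemma prank_maxchain:
  assumes P: "is_poset A lt" and R: "ranked_of A lt n" and M: "is_maxchain A lt M"
  shows "prank A lt ` M = {0..n}"
proof (rule card_seteq)
  have C: "M \<subseteq> A" "\<forall>x\<in>M. \<forall>y\<in>M. x = y \<or> lt x y \<or> lt y x"
    using M unfolding is_maxchain_def is_chain_def by auto
  have "inj_on (prank A lt) M"
    by (rule inj_onI) (use C prank_less[OF P] in \<open>metis less_irrefl subsetD\<close>)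
  then show "card {0..n} \<le> card (prank A lt ` M)"
    using R M unfolding ranked_of_def by (simp add: card_image)
  show "prank A lt ` M \<subseteq> {0..n}" using prank_le_rank[OF P R] C(1) by auto
qed simp

lemma ranked_interpolate:
  assumes P: "is_poset A lt" and R: "ranked_of A lt n"
    and pq: "p \<in> A" "q \<in> A" "lt p q" and r: "prank A lt p < r" "r < prank A lt q"
  shows "\<exists>z\<in>A. prank A lt z = r \<and> lt p z \<and> lt z q"
proof -
  have "is_chain A lt {p, q}" using pq unfolding is_chain_def by auto
  then obtain M where M: "is_maxchain A lt M" "{p, q} \<subseteq> M"
    using maxchain_extends[OF is_posetD(1)[OF P]] by blast
  have "r \<le> n" using prank_le_rank[OF P R pq(2)] r by simp
  then obtain z where z: "z \<in> M" "prank A lt z = r"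
    using prank_maxchain[OF P R M(1)] by (metis atLeastAtMost_iff image_iff zero_le)
  have C: "M \<subseteq> A" "\<forall>x\<in>M. \<forall>y\<in>M. x = y \<or> lt x y \<or> lt y x"
    using M(1) unfolding is_maxchain_def is_chain_def by auto
  have zA: "z \<in> A" using C(1) z(1) by auto
  have "z \<noteq> p \<and> \<not> lt z p" "z \<noteq> q \<and> \<not> lt q z"
    using r z(2) prank_less[OF P zA pq(1)] prank_less[OF P pq(2) zA] by auto
  then have "lt p z" "lt z q" using C(2) M(2) z(1) by blast+
  then show ?thesis using z(2) zA by blast
qed

section \<open>Order isomorphisms\<close>

definition poset_iso_via ::
  "'a set \<Rightarrow> ('a \<Rightarrow> 'a \<Rightarrow> bool) \<Rightarrow> 'b set \<Rightarrow> ('b \<Rightarrow> 'b \<Rightarrow> bool) \<Rightarrow> ('a \<Rightarrow> 'b) \<Rightarrow> ('b \<Rightarrow> 'a) \<Rightarrow> bool"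
  where
  "poset_iso_via A lt B lt' f g \<longleftrightarrow>
     (\<forall>x\<in>A. f x \<in> B \<and> g (f x) = x) \<and> (\<forall>y\<in>B. g y \<in> A \<and> f (g y) = y) \<and>
     (\<forall>x\<in>A. \<forall>y\<in>A. lt x y \<longleftrightarrow> lt' (f x) (f y))"

lemma poset_iso_viaD:
  assumes "poset_iso_via A lt B lt' f g"
  shows "x \<in> A \<Longrightarrow> f x \<in> B" and "x \<in> A \<Longrightarrow> g (f x) = x"
    and "y \<in> B \<Longrightarrow> g y \<in> A" and "y \<in> B \<Longrightarrow> f (g y) = y"
    and "x \<in> A \<Longrightarrow> x' \<in> A \<Longrightarrow> lt x x' \<longleftrightarrow> lt' (f x) (f x')"
    and "inj_on f A"
  using assms unfolding poset_iso_via_def by (auto intro: inj_on_inverseI)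

lemma poset_iso_via_sym: "poset_iso_via A lt B lt' f g \<Longrightarrow> poset_iso_via B lt' A lt g f"
  unfolding poset_iso_via_def by metis

lemma poset_iso_via_trans:
  "poset_iso_via A lt B lt' f g \<Longrightarrow> poset_iso_via B lt' C lt'' f' g' \<Longrightarrow>
   poset_iso_via A lt C lt'' (f' \<circ> f) (g \<circ> g')"
  unfolding poset_iso_via_def by auto

lemma poset_iso_via_restrict:
  "poset_iso_via A lt B lt' f g \<Longrightarrow> S \<subseteq> A \<Longrightarrow> poset_iso_via S lt (f ` S) lt' f g"
  unfolding poset_iso_via_def by (auto simp: subset_iff)

lemma poset_iso_iff_via: "poset_iso A lt B lt' \<longleftrightarrow> (\<exists>f g. poset_iso_via A lt B lt' f g)"
proof
  assume "poset_iso A lt B lt'"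
  then obtain f where f: "bij_betw f A B" "\<forall>x\<in>A. \<forall>y\<in>A. lt x y \<longleftrightarrow> lt' (f x) (f y)"
    unfolding poset_iso_def by blast
  then have "poset_iso_via A lt B lt' f (the_inv_into A f)"
    unfolding poset_iso_via_def
    by (auto simp: bij_betw_def the_inv_into_f_f f_the_inv_into_f intro: the_inv_into_into)
  then show "\<exists>f g. poset_iso_via A lt B lt' f g" by blast
next
  assume "\<exists>f g. poset_iso_via A lt B lt' f g"
  then obtain f g where I: "poset_iso_via A lt B lt' f g" by blast
  then have "bij_betw f A B"
    unfolding poset_iso_via_def by (intro bij_betw_byWitness[of _ g]) auto
  then show "poset_iso A lt B lt'" using I unfolding poset_iso_def poset_iso_via_def by blast
qed

lemma poset_iso_sym: "poset_iso A lt B lt' \<Longrightarrow> poset_iso B lt' A lt"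
  by (meson poset_iso_iff_via poset_iso_via_sym)

lemma poset_iso_trans: "poset_iso A lt B lt' \<Longrightarrow> poset_iso B lt' C lt'' \<Longrightarrow> poset_iso A lt C lt''"
  by (meson poset_iso_iff_via poset_iso_via_trans)

lemma chain_to_via:
  assumes I: "poset_iso_via A lt B lt' f g" and "chain_to A lt m p"
  shows "chain_to B lt' m (f p)"
proof -
  obtain h where h: "h m = p" "\<forall>i\<le>m. h i \<in> A" "\<forall>i<m. lt (h i) (h (Suc i))"
    using assms(2) unfolding chain_to_def by blast
  then have "(f \<circ> h) m = f p" "\<forall>i\<le>m. (f \<circ> h) i \<in> B" "\<forall>i<m. lt' ((f \<circ> h) i) ((f \<circ> h) (Suc i))"
    using I unfolding poset_iso_via_def by auto
  then show ?thesis unfolding chain_to_def by blast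
qed

lemma prank_via:
  assumes I: "poset_iso_via A lt B lt' f g" and p: "p \<in> A"
  shows "prank B lt' (f p) = prank A lt p"
proof -
  have "chain_to B lt' m (f p) \<longleftrightarrow> chain_to A lt m p" for m
    using chain_to_via[OF I, of m p] chain_to_via[OF poset_iso_via_sym[OF I], of m "f p"] I p
    unfolding poset_iso_via_def by auto
  then show ?thesis unfolding prank_chain_to by simp
qed

lemma chain_via:
  assumes I: "poset_iso_via A lt B lt' f g" and C: "is_chain A lt C"
  shows "is_chain B lt' (f ` C)"
  using assms unfolding poset_iso_via_def is_chain_def by (auto simp: subset_iff) metis

lemma maxchain_via:
  assumes I: "poset_iso_via A lt B lt' f g" and M: "is_maxchain A lt M"
  shows "is_maxchain B lt' (f ` M)"
  unfolding is_maxchain_def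
proof (intro conjI allI impI)
  show "is_chain B lt' (f ` M)" using chain_via[OF I] M unfolding is_maxchain_def by blast
  fix D assume D: "is_chain B lt' D \<and> f ` M \<subseteq> D"
  have MA: "M \<subseteq> A" and DB: "D \<subseteq> B" using M D unfolding is_maxchain_def is_chain_def by auto
  have "M \<subseteq> g ` D" using I D MA unfolding poset_iso_via_def by (force simp: subset_iff)
  then have "g ` D = M" using M chain_via[OF poset_iso_via_sym[OF I]] D unfolding is_maxchain_def by blast
  then show "D = f ` M" using I DB unfolding poset_iso_via_def by (force simp: subset_iff)
qed

lemma ranked_of_via:
  assumes I: "poset_iso_via A lt B lt' f g" and R: "ranked_of A lt n"
  shows "ranked_of B lt' n"
  unfolding ranked_of_def
proof (intro allI impI)
  fix M assume M: "is_maxchain B lt' M"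
  then have "card (g ` M) = n + 1"
    using R maxchain_via[OF poset_iso_via_sym[OF I]] unfolding ranked_of_def by blast
  moreover have "inj_on g M"
    using I M unfolding poset_iso_via_def is_maxchain_def is_chain_def inj_on_def by (metis subsetD)
  ultimately show "card M = n + 1" by (simp add: card_image)
qed

lemma ranked_iso: "poset_iso A lt B lt' \<Longrightarrow> ranked A lt \<Longrightarrow> ranked B lt'"
  unfolding ranked_def by (metis poset_iso_iff_via ranked_of_via)

lemma rank_slice_via:
  assumes I: "poset_iso_via A lt B lt' f g"
  shows "rank_slice B lt' i j = f ` rank_slice A lt i j"
proof
  show "f ` rank_slice A lt i j \<subseteq> rank_slice B lt' i j"
    using I prank_via[OF I] unfolding rank_slice_def poset_iso_via_def by auto
  show "rank_slice B lt' i j \<subseteq> f ` rank_slice A lt i j"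
  proof
    fix y assume y: "y \<in> rank_slice B lt' i j"
    then have "g y \<in> A" "f (g y) = y" using I unfolding rank_slice_def poset_iso_via_def by auto
    then show "y \<in> f ` rank_slice A lt i j"
      using y prank_via[OF I, of "g y"] unfolding rank_slice_def by (metis (mono_tags, lifting) image_eqI mem_Collect_eq)
  qed
qed

lemma six_stack_iso:
  assumes "poset_iso A lt B lt'" and "six_stack A lt"
  shows "six_stack B lt'"
proof -
  obtain f g where I: "poset_iso_via A lt B lt' f g" using assms(1) poset_iso_iff_via by blast
  obtain n where n: "n \<ge> 1" "ranked_of A lt n"
    "\<forall>i<n. poset_iso (rank_slice A lt i (Suc i)) lt crown6_carrier crown6_lt"
    using assms(2) unfolding six_stack_def by blast
  have "poset_iso (rank_slice A lt i (Suc i)) lt (rank_slice B lt' i (Suc i)) lt'" for i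
    using poset_iso_via_restrict[OF I, of "rank_slice A lt i (Suc i)"] rank_slice_via[OF I]
    unfolding poset_iso_iff_via rank_slice_def by auto
  then show ?thesis
    unfolding six_stack_def using n ranked_of_via[OF I] poset_iso_sym poset_iso_trans by blast
qed

lemma two_antichain_iso:
  assumes "poset_iso A lt B lt'" and "two_antichain A lt"
  shows "two_antichain B lt'"
proof -
  obtain f where f: "bij_betw f A B" "\<forall>x\<in>A. \<forall>y\<in>A. lt x y \<longleftrightarrow> lt' (f x) (f y)"
    using assms(1) unfolding poset_iso_def by blast
  then show ?thesis
    using assms(2) bij_betw_same_card[OF f(1)] unfolding two_antichain_def bij_betw_def by auto
qed

section \<open>Ordinal sums\<close>

lemma osum_iso:
  assumes len: "length Qs = length Ps"
    and I: "\<forall>j<length Ps. poset_iso (fst (Ps!j)) (snd (Ps!j)) (fst (Qs!j)) (snd (Qs!j))"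
  shows "poset_iso (osum_carrier Ps) (osum_lt Ps) (osum_carrier Qs) (osum_lt Qs)"
proof -
  obtain F G where FG: "\<And>j. j < length Ps \<Longrightarrow>
      poset_iso_via (fst (Ps!j)) (snd (Ps!j)) (fst (Qs!j)) (snd (Qs!j)) (F j) (G j)"
    using I unfolding poset_iso_iff_via by metis
  have "poset_iso_via (osum_carrier Ps) (osum_lt Ps) (osum_carrier Qs) (osum_lt Qs)
      (\<lambda>p. (fst p, F (fst p) (snd p))) (\<lambda>p. (fst p, G (fst p) (snd p)))"
    unfolding poset_iso_via_def
  proof (intro conjI ballI)
    fix p assume "p \<in> osum_carrier Ps"
    then show "(fst p, F (fst p) (snd p)) \<in> osum_carrier Qs"
      "(fst (fst p, F (fst p) (snd p)), G (fst (fst p, F (fst p) (snd p))) (snd (fst p, F (fst p) (snd p)))) = p"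
      using FG len unfolding osum_carrier_def poset_iso_via_def by auto
  next
    fix q assume "q \<in> osum_carrier Qs"
    then show "(fst q, G (fst q) (snd q)) \<in> osum_carrier Ps"
      "(fst (fst q, G (fst q) (snd q)), F (fst (fst q, G (fst q) (snd q))) (snd (fst q, G (fst q) (snd q)))) = q"
      using FG len unfolding osum_carrier_def poset_iso_via_def by auto
  next
    fix p q assume "p \<in> osum_carrier Ps" "q \<in> osum_carrier Ps"
    then show "osum_lt Ps p q \<longleftrightarrow> osum_lt Qs (fst p, F (fst p) (snd p)) (fst q, F (fst q) (snd q))"
      using FG unfolding osum_carrier_def osum_lt_def poset_iso_via_def by auto
  qed
  then show ?thesis unfolding poset_iso_iff_via by blast
qed

lemma osum_summand_iso:
  assumes "j < length Ss"
  shows "poset_iso (fst (Ss!j)) (snd (Ss!j)) (Pair j ` fst (Ss!j)) (osum_lt Ss)"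
  unfolding poset_iso_iff_via
  by (rule exI[of _ "Pair j"], rule exI[of _ snd]) (auto simp: poset_iso_via_def osum_lt_def)

lemma is_chain_summand:
  assumes "is_chain (osum_carrier Ss) (osum_lt Ss) D" and "j < length Ss"
  shows "is_chain (fst (Ss!j)) (snd (Ss!j)) {x. (j, x) \<in> D}"
  using assms unfolding is_chain_def osum_carrier_def osum_lt_def by fastforce

lemma osum_maxchain:
  assumes M: "\<forall>j<length Ss. is_maxchain (fst (Ss!j)) (snd (Ss!j)) (M j)"
  shows "is_maxchain (osum_carrier Ss) (osum_lt Ss) (Sigma {..<length Ss} M)"
  unfolding is_maxchain_def
proof (intro conjI allI impI)
  show "is_chain (osum_carrier Ss) (osum_lt Ss) (Sigma {..<length Ss} M)"
    unfolding is_chain_def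
  proof (intro conjI ballI)
    show "Sigma {..<length Ss} M \<subseteq> osum_carrier Ss"
      using M unfolding is_maxchain_def is_chain_def osum_carrier_def by auto
    have cmp: "\<forall>x\<in>M j. \<forall>y\<in>M j. x = y \<or> snd (Ss!j) x y \<or> snd (Ss!j) y x" if "j < length Ss" for j
      using M that unfolding is_maxchain_def is_chain_def by blast
    fix p q assume "p \<in> Sigma {..<length Ss} M" "q \<in> Sigma {..<length Ss} M"
    then obtain i x j y where "p = (i, x)" "q = (j, y)" "i < length Ss" "x \<in> M i" "y \<in> M j" by blast
    then show "p = q \<or> osum_lt Ss p q \<or> osum_lt Ss q p"
      unfolding osum_lt_def using cmp[of i] by (cases i j rule: linorder_cases) auto
  qed
  fix D assume D: "is_chain (osum_carrier Ss) (osum_lt Ss) D \<and> Sigma {..<length Ss} M \<subseteq> D"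
  have slice: "{x. (j, x) \<in> D} = M j" if "j < length Ss" for j
    using M is_chain_summand[OF conjunct1[OF D] that] D that unfolding is_maxchain_def by blast
  show "D = Sigma {..<length Ss} M"
  proof
    show "D \<subseteq> Sigma {..<length Ss} M"
    proof
      fix p assume "p \<in> D"
      moreover obtain j x where "p = (j, x)" by fastforce
      moreover have "j < length Ss"
        using D \<open>p \<in> D\<close> \<open>p = (j, x)\<close> unfolding is_chain_def osum_carrier_def by auto
      ultimately show "p \<in> Sigma {..<length Ss} M" using slice by auto
    qed
  qed (use D in blast)
qed

lemma ranked_summand:
  assumes R: "ranked (osum_carrier Ss) (osum_lt Ss)"
    and F: "\<forall>S\<in>set Ss. finite (fst S) \<and> fst S \<noteq> {}" and j: "j < length Ss"
  shows "ranked (fst (Ss!j)) (snd (Ss!j))"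
proof -
  obtain N where N: "ranked_of (osum_carrier Ss) (osum_lt Ss) N" using R unfolding ranked_def by blast
  have fin: "finite (fst (Ss!i))" if "i < length Ss" for i using F that by simp
  have "\<exists>C. is_maxchain (fst (Ss!i)) (snd (Ss!i)) C" if "i < length Ss" for i
    using maxchain_extends[OF fin[OF that], of "snd (Ss!i)" "{}"] unfolding is_chain_def by auto
  then obtain M where M: "\<forall>i<length Ss. is_maxchain (fst (Ss!i)) (snd (Ss!i)) (M i)" by metis
  have finM: "finite C" if "i < length Ss" "is_maxchain (fst (Ss!i)) (snd (Ss!i)) C" for i C
    using fin[OF that(1)] that(2) finite_subset unfolding is_maxchain_def is_chain_def by blast
  have card_eq: "card C = N + 1 - (\<Sum>i\<in>{..<length Ss} - {j}. card (M i))"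
    if C: "is_maxchain (fst (Ss!j)) (snd (Ss!j)) C" for C
  proof -
    let ?M = "M(j := C)"
    have "\<forall>i<length Ss. is_maxchain (fst (Ss!i)) (snd (Ss!i)) (?M i)" using M C by simp
    then have "card (Sigma {..<length Ss} ?M) = N + 1"
      using N osum_maxchain unfolding ranked_of_def by blast
    moreover have "card (Sigma {..<length Ss} ?M) = card C + (\<Sum>i\<in>{..<length Ss} - {j}. card (M i))"
      using finM M C j by (simp add: sum.remove)
    ultimately show ?thesis by simp
  qed
  have "M j \<noteq> {}"
  proof
    assume "M j = {}"
    moreover obtain x where "x \<in> fst (Ss!j)" using F j by (meson ex_in_conv nth_mem)
    then have "is_chain (fst (Ss!j)) (snd (Ss!j)) {x}" unfolding is_chain_def by auto
    ultimately show False using M j unfolding is_maxchain_def by blast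
  qed
  then have "card (M j) \<ge> 1" using finM[OF j] M j by (simp add: Suc_le_eq card_gt_0_iff)
  moreover have "card C = card (M j)" if "is_maxchain (fst (Ss!j)) (snd (Ss!j)) C" for C
    using card_eq[OF that] card_eq[of "M j"] M j by simp
  ultimately have "ranked_of (fst (Ss!j)) (snd (Ss!j)) (card (M j) - 1)"
    unfolding ranked_of_def by simp
  then show ?thesis unfolding ranked_def by blast
qed

section \<open>Nice sections are six-stacks\<close>

locale grid_section =
  fixes B :: "(nat \<times> nat) set" and R :: "nat \<times> nat \<Rightarrow> nat \<times> nat \<Rightarrow> bool" and n :: nat
  assumes poset: "is_poset B R" and height: "n \<ge> 1" and carrier: "B = {0..2} \<times> {0..n}"
    and column_lt: "\<forall>i\<le>2. \<forall>k l. k < l \<and> l \<le> n \<longrightarrow> R (i,k) (i,l)"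
    and level_antichain: "\<forall>k\<le>n. \<forall>i\<le>2. \<forall>j\<le>2. \<not> R (i,k) (j,k)"
    and rotate: "\<forall>i\<le>2. \<forall>j\<le>2. \<forall>k\<le>n. \<forall>l\<le>n. R (i,k) (j,l) \<longrightarrow>
                   R ((i+1) mod 3, k) ((j+1) mod 3, l)"
    and not_complete: "\<forall>k<n. \<exists>i\<le>2. \<exists>j\<le>2. \<not> R (i,k) (j, Suc k)"

lemma is_section_iff:
  "is_section B R \<longleftrightarrow> is_poset B R \<and> (two_antichain B R \<or> (\<exists>n. grid_section B R n))"
  unfolding is_section_def grid_section_def by (rule conj_cong[OF refl], rule disj_cong[OF refl]) auto

context grid_section
begin

lemma lt_imp_level_less:
  assumes "p \<in> B" "q \<in> B" "R p q"
  shows "snd p < snd q"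
proof (rule ccontr)
  obtain a b c d where pq: "p = (a, b)" "q = (c, d)" by fastforce
  assume "\<not> snd p < snd q"
  then consider "d = b" | "d < b" using pq by fastforce
  then show False
  proof cases
    case 2
    then have "R (c, d) (c, b)" using column_lt assms carrier pq by auto
    then have "R (a, b) (c, b)"
      using is_posetD(3)[OF poset, of p q "(c, b)"] assms pq carrier by auto
    then show False using level_antichain assms carrier pq by auto
  qed (use level_antichain assms carrier pq in auto)
qed

lemma prank_grid:
  assumes "(i, k) \<in> B"
  shows "prank B R (i, k) = k"
proof (rule antisym)
  obtain f where f: "f (prank B R (i, k)) = (i, k)" "\<forall>t\<le>prank B R (i, k). f t \<in> B"
    "\<forall>t<prank B R (i, k). R (f t) (f (Suc t))"
    using chain_to_prank[OF poset assms] unfolding chain_to_def by blast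
  have "t \<le> snd (f t)" if "t \<le> prank B R (i, k)" for t
    using that
  proof (induction t)
    case (Suc t)
    then have "snd (f t) < snd (f (Suc t))" using lt_imp_level_less f by simp
    then show ?case using Suc by simp
  qed simp
  then show "prank B R (i, k) \<le> k" using f by fastforce
  have "chain_to B R k (i, k)"
    unfolding chain_to_def using assms column_lt carrier by (intro exI[of _ "Pair i"]) auto
  then show "k \<le> prank B R (i, k)" by (rule prank_ge[OF poset])
qed

lemma ranked_of_grid:
  assumes "ranked B R"
  shows "ranked_of B R n"
proof -
  obtain n' where n': "ranked_of B R n'" using assms unfolding ranked_def by blast
  have "(0, n) \<in> B" "prank B R (0, n) = n" using carrier prank_grid by auto
  then have "n \<le> n'" using prank_le_rank[OF poset n'] by metis
  obtain M where M: "is_maxchain B R M"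
    using maxchain_extends[OF is_posetD(1)[OF poset], of R "{}"] unfolding is_chain_def by auto
  then have "n' \<in> prank B R ` M" using prank_maxchain[OF poset n'] by auto
  moreover have "prank B R p \<le> n" if "p \<in> B" for p using that prank_grid carrier by auto
  ultimately have "n' \<le> n" using M unfolding is_maxchain_def is_chain_def by auto
  then show ?thesis using n' \<open>n \<le> n'\<close> by simp
qed


context
  fixes k assumes k: "k < n"
begin

lemma cross_rotation:
  "R (1,k) (2,Suc k) = R (0,k) (1,Suc k)" "R (2,k) (0,Suc k) = R (0,k) (1,Suc k)"
  "R (1,k) (0,Suc k) = R (0,k) (2,Suc k)" "R (2,k) (1,Suc k) = R (0,k) (2,Suc k)"
  using rotate[rule_format, of 0 1 k "Suc k"] rotate[rule_format, of 1 2 k "Suc k"]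
    rotate[rule_format, of 2 0 k "Suc k"] rotate[rule_format, of 0 2 k "Suc k"]
    rotate[rule_format, of 2 1 k "Suc k"] rotate[rule_format, of 1 0 k "Suc k"] k
  by (simp_all add: numeral_2_eq_2) blast+

lemma vertical_cover: "i \<le> 2 \<Longrightarrow> R (i,k) (i,Suc k)"
  using column_lt k by auto

lemma not_both_cross: "\<not> (R (0,k) (1,Suc k) \<and> R (0,k) (2,Suc k))"
proof
  assume h: "R (0,k) (1,Suc k) \<and> R (0,k) (2,Suc k)"
  obtain i j where ij: "i \<le> 2" "j \<le> 2" "\<not> R (i,k) (j,Suc k)" using not_complete k by blast
  then have "i = 0 \<or> i = 1 \<or> i = 2" "j = 0 \<or> j = 1 \<or> j = 2" by auto
  then show False using ij(3) h cross_rotation vertical_cover[of 0] vertical_cover[of 1] vertical_cover[of 2]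
    by (elim disjE) simp_all
qed

text \<open>Niceness yields some s < (0, k+1) not below (0, k); an element of rank k between s and
  (0, k+1) then forces one of the two cross relations.\<close>

lemma some_cross_cover:
  assumes nice: "is_nice B R" and ranked: "ranked B R"
  shows "R (0,k) (1,Suc k) \<or> R (0,k) (2,Suc k)"
proof (rule ccontr)
  assume none: "\<not> (R (0,k) (1,Suc k) \<or> R (0,k) (2,Suc k))"
  have p: "(0,k) \<in> B" and q: "(0,Suc k) \<in> B" using k carrier by auto
  obtain s where s: "s \<in> B" "R s (0,Suc k)" "\<not> (s = (0,k) \<or> R s (0,k))"
    using nice p q vertical_cover[of 0] unfolding is_nice_def by blast
  obtain c m where cm: "s = (c, m)" "c \<le> 2" using s carrier by auto
  have "m < Suc k" using lt_imp_level_less[OF s(1) q s(2)] cm by simp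
  moreover have "m \<noteq> k"
  proof
    assume "m = k"
    moreover have "c = 0 \<or> c = 1 \<or> c = 2" using cm by auto
    ultimately show False using s cm(1) none cross_rotation by (elim disjE) simp_all
  qed
  ultimately have "prank B R s < k" using prank_grid s(1) cm(1) by simp
  then obtain z where z: "z \<in> B" "prank B R z = k" "R s z" "R z (0,Suc k)"
    using ranked_interpolate[OF poset ranked_of_grid[OF ranked] s(1) q s(2), of k] prank_grid[OF q] by auto
  then obtain e where e: "z = (e, k)" "e \<le> 2" using prank_grid carrier by auto
  then have "e = 0 \<or> e = 1 \<or> e = 2" by auto
  then show False using z e(1) none cross_rotation s(3) by (elim disjE) simp_all
qed

lemma rank_slice_grid:
  "rank_slice B R k (Suc k) = {(0,k), (1,k), (2,k), (0,Suc k), (1,Suc k), (2,Suc k)}"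
proof -
  have "rank_slice B R k (Suc k) = {p \<in> B. k \<le> snd p \<and> snd p \<le> Suc k}"
    unfolding rank_slice_def using prank_grid by (intro Collect_cong) auto
  also have "\<dots> = {(0,k), (1,k), (2,k), (0,Suc k), (1,Suc k), (2,Suc k)}"
    using k unfolding carrier by auto
  finally show ?thesis .
qed


lemma rank_slice_crown:
  assumes nice: "is_nice B R" and ranked: "ranked B R"
  shows "poset_iso (rank_slice B R k (Suc k)) R crown6_carrier crown6_lt"
proof -
  have same_level: "\<not> R (i,k) (j,k)" "\<not> R (i,Suc k) (j,Suc k)" if "i \<le> 2" "j \<le> 2" for i j
    using level_antichain k that by auto
  have downward: "\<not> R (i,Suc k) (j,k)" if "i \<le> 2" "j \<le> 2" for i j
    using lt_imp_level_less[of "(i,Suc k)" "(j,k)"] k that carrier by auto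
  note facts = same_level downward vertical_cover cross_rotation
  have crown: "crown6_carrier = {0,1,2,3,4,5}" by (simp add: crown6_carrier_def)
  show ?thesis
    unfolding rank_slice_grid poset_iso_iff_via
  proof (cases "R (0,k) (1,Suc k)")
    case True
    then have "\<not> R (0,k) (2,Suc k)" using not_both_cross by auto
    then have "poset_iso_via {(0,k), (1,k), (2,k), (0,Suc k), (1,Suc k), (2,Suc k)} R crown6_carrier crown6_lt
      (\<lambda>p. if p = (0,k) then 0 else if p = (1,k) then 1 else if p = (2,k) then 2
           else if p = (0,Suc k) then 5 else if p = (1,Suc k) then 3 else 4)
      (\<lambda>x. if x = 0 then (0,k) else if x = 1 then (1,k) else if x = 2 then (2,k)
           else if x = 5 then (0,Suc k) else if x = 3 then (1,Suc k) else (2,Suc k))"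
      unfolding poset_iso_via_def crown using True facts by (simp add: crown6_lt_def)
    then show "\<exists>f g. poset_iso_via {(0,k), (1,k), (2,k), (0,Suc k), (1,Suc k), (2,Suc k)} R
      crown6_carrier crown6_lt f g" by blast
  next
    case False
    then have "R (0,k) (2,Suc k)" using some_cross_cover[OF nice ranked] by auto
    then have "poset_iso_via {(0,k), (1,k), (2,k), (0,Suc k), (1,Suc k), (2,Suc k)} R crown6_carrier crown6_lt
      (\<lambda>p. if p = (0,k) then 0 else if p = (1,k) then 1 else if p = (2,k) then 2
           else if p = (0,Suc k) then 3 else if p = (1,Suc k) then 4 else 5)
      (\<lambda>x. if x = 0 then (0,k) else if x = 1 then (1,k) else if x = 2 then (2,k)
           else if x = 3 then (0,Suc k) else if x = 4 then (1,Suc k) else (2,Suc k))"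
      unfolding poset_iso_via_def crown using False facts by (simp add: crown6_lt_def)
    then show "\<exists>f g. poset_iso_via {(0,k), (1,k), (2,k), (0,Suc k), (1,Suc k), (2,Suc k)} R
      crown6_carrier crown6_lt f g" by blast
  qed
qed

end

lemma six_stack_grid:
  assumes "is_nice B R" and "ranked B R"
  shows "six_stack B R"
  unfolding six_stack_def using height ranked_of_grid[OF assms(2)] rank_slice_crown[OF _ assms] by blast

end

lemma nice_section_cases:
  assumes "nice_section B R" and "ranked B R"
  shows "two_antichain B R \<or> six_stack B R"
proof -
  have "two_antichain B R \<or> (\<exists>n. grid_section B R n)" and nice: "is_nice B R"
    using assms(1) unfolding nice_section_def is_section_iff by simp_all
  then show ?thesis using grid_section.six_stack_grid[OF _ nice assms(2)] by blast
qed

section \<open>The standard nice section\<close>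

definition stack_lt :: "nat \<times> nat \<Rightarrow> nat \<times> nat \<Rightarrow> bool" where
  "stack_lt p q \<longleftrightarrow> snd p < snd q \<and> (Suc (snd p) < snd q \<or> fst q = fst p \<or> fst q = (fst p + 1) mod 3)"

lemma is_section_stack_lt:
  assumes "n \<ge> 1"
  shows "is_section ({0..2} \<times> {0..n}) stack_lt"
  unfolding is_section_def
proof (intro conjI disjI2 exI[of _ n])
  show "is_poset ({0..2} \<times> {0..n}) stack_lt"
    unfolding is_poset_def stack_lt_def by auto
  have "\<not> stack_lt (0, k) (2, Suc k)" for k by (simp add: stack_lt_def)
  then show "\<forall>k<n. \<exists>i\<le>2. \<exists>j\<le>2. \<not> stack_lt (i, k) (j, Suc k)" by blast
  show "\<forall>i\<le>2. \<forall>j\<le>2. \<forall>k\<le>n. \<forall>l\<le>n. stack_lt (i, k) (j, l) \<longrightarrow>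
      stack_lt ((i + 1) mod 3, k) ((j + 1) mod 3, l)"
    unfolding stack_lt_def by (simp only: fst_conv snd_conv) blast
qed (use assms in \<open>auto simp: stack_lt_def\<close>)

lemma is_nice_stack_lt: "is_nice ({0..2} \<times> {0..n}) stack_lt"
  unfolding is_nice_def
proof (intro ballI impI conjI)
  fix p q assume pq: "p \<in> {0..2} \<times> {0..n}" "q \<in> {0..2} \<times> {0..n}" "stack_lt p q"
  then obtain i k j l where p: "p = (i, k)" and q: "q = (j, l)" and bounds: "i \<le> 2" "j \<le> 2" "l \<le> n"
    and "k < l" by (auto simp: stack_lt_def)
  have "i = 0 \<or> i = 1 \<or> i = 2" using bounds(1) by auto
  then have rot: "(i + 1) mod 3 \<noteq> i" "(i + 2) mod 3 \<noteq> i" "((i + 2) mod 3 + 1) mod 3 = i"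
    by (elim disjE; simp)+
  consider (vertical) "l = Suc k" "j = i" | (diagonal) "l = Suc k" "j = (i + 1) mod 3" "j \<noteq> i"
    | (distant) "Suc k < l"
    using pq(3) p q \<open>k < l\<close> rot(1) unfolding stack_lt_def by (cases "l = Suc k") auto
  note shape = this
  from shape show "\<exists>r\<in>{0..2} \<times> {0..n}. stack_lt p r \<and> \<not> (q = r \<or> stack_lt q r)"
  proof cases
    case vertical
    then show ?thesis using p q bounds rot by (intro bexI[of _ "((i + 1) mod 3, Suc k)"]) (auto simp: stack_lt_def)
  next
    case diagonal
    then show ?thesis using p q bounds by (intro bexI[of _ "(i, Suc k)"]) (auto simp: stack_lt_def)
  next
    case distant
    then show ?thesis using p q bounds by (intro bexI[of _ "(i, Suc k)"]) (auto simp: stack_lt_def)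
  qed
  from shape show "\<exists>s\<in>{0..2} \<times> {0..n}. stack_lt s q \<and> \<not> (s = p \<or> stack_lt s p)"
  proof cases
    case vertical
    then show ?thesis using p q bounds rot by (intro bexI[of _ "((i + 2) mod 3, k)"]) (auto simp: stack_lt_def)
  next
    case diagonal
    then show ?thesis using p q bounds by (intro bexI[of _ "(j, k)"]) (auto simp: stack_lt_def)
  next
    case distant
    then show ?thesis using p q bounds by (intro bexI[of _ "(j, l - 1)"]) (auto simp: stack_lt_def)
  qed
qed

section \<open>Six-stacks are isomorphic to the standard section\<close>

lemma crown6_lt_range: "crown6_lt x y \<Longrightarrow> x \<in> {0,1,2} \<and> y \<in> {3,4,5}"
  by (auto simp: crown6_lt_def)

lemma crown6_lower_exists: "y \<in> {3,4,5} \<Longrightarrow> \<exists>x\<in>crown6_carrier. crown6_lt x y"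
  by (auto simp: crown6_carrier_def crown6_lt_def)

lemma crown6_common_upper:
  "x \<in> {0,1,2} \<Longrightarrow> y \<in> {0,1,2} \<Longrightarrow> x \<noteq> y \<Longrightarrow> \<exists>z\<in>crown6_carrier. crown6_lt x z \<and> crown6_lt y z"
  by (auto simp: crown6_carrier_def crown6_lt_def)

lemma crown6_no_common_upper_of_three:
  "x \<in> {0,1,2} \<Longrightarrow> y \<in> {0,1,2} \<Longrightarrow> w \<in> {0,1,2} \<Longrightarrow> x \<noteq> y \<Longrightarrow> x \<noteq> w \<Longrightarrow> y \<noteq> w \<Longrightarrow>
   \<not> (crown6_lt x z \<and> crown6_lt y z \<and> crown6_lt w z)"
  by (auto simp: crown6_lt_def)

locale crown_stack =
  fixes A :: "'a set" and lt :: "'a \<Rightarrow> 'a \<Rightarrow> bool" and n :: nat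
  assumes poset: "is_poset A lt" and height: "n \<ge> 1" and ranked: "ranked_of A lt n"
    and crown_slices: "\<forall>k<n. poset_iso (rank_slice A lt k (Suc k)) lt crown6_carrier crown6_lt"
begin

definition level :: "nat \<Rightarrow> 'a set" where
  "level k = {p \<in> A. prank A lt p = k}"

lemma level_subset: "level k \<subseteq> A"
  unfolding level_def by auto

lemma level_crown_iso:
  assumes k: "k < n"
  obtains h g where "poset_iso_via (level k \<union> level (Suc k)) lt crown6_carrier crown6_lt h g"
    and "h ` level k = {0,1,2}" and "h ` level (Suc k) = {3,4,5}"
proof -
  have "rank_slice A lt k (Suc k) = level k \<union> level (Suc k)"
    unfolding rank_slice_def level_def by auto
  then obtain h g where I: "poset_iso_via (level k \<union> level (Suc k)) lt crown6_carrier crown6_lt h g"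
    using crown_slices k poset_iso_iff_via by metis
  then have h: "\<forall>x\<in>level k \<union> level (Suc k). h x \<in> crown6_carrier \<and> g (h x) = x"
    and g: "\<forall>y\<in>crown6_carrier. g y \<in> level k \<union> level (Suc k) \<and> h (g y) = y"
    and mono: "\<forall>x\<in>level k \<union> level (Suc k). \<forall>y\<in>level k \<union> level (Suc k). lt x y \<longleftrightarrow> crown6_lt (h x) (h y)"
    unfolding poset_iso_via_def by auto
  have top: "h p \<in> {3,4,5}" if p: "p \<in> level (Suc k)" for p
  proof -
    obtain q where "q \<in> A" "lt q p" "prank A lt q = k"
      using prank_Suc_lower[OF poset] p unfolding level_def by blast
    then have "crown6_lt (h q) (h p)" using mono p unfolding level_def by auto
    then show ?thesis using crown6_lt_range by blast
  qed
  have bottom: "h p \<in> {0,1,2}" if p: "p \<in> level k" for p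
  proof (rule ccontr)
    assume "h p \<notin> {0,1,2}"
    moreover have "h p \<in> crown6_carrier" using h p by blast
    ultimately have "h p \<in> {3,4,5}" unfolding crown6_carrier_def by auto
    then obtain x where x: "x \<in> crown6_carrier" "crown6_lt x (h p)" using crown6_lower_exists by blast
    then have "lt (g x) p" using g mono p by fastforce
    then have "prank A lt (g x) < prank A lt p"
      using prank_less[OF poset] g x(1) p level_subset by blast
    then show False using g x(1) p unfolding level_def by auto
  qed
  have onto: "x \<in> h ` level k \<or> x \<in> h ` level (Suc k)" if "x \<in> crown6_carrier" for x
    using g that by (metis UnE image_eqI)
  have "{0,1,2} \<subseteq> h ` level k"
  proof
    fix x :: nat assume x: "x \<in> {0,1,2}"
    then have "x \<notin> h ` level (Suc k)" using top by fastforce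
    then show "x \<in> h ` level k" using onto[of x] x unfolding crown6_carrier_def by blast
  qed
  moreover have "{3,4,5} \<subseteq> h ` level (Suc k)"
  proof
    fix x :: nat assume x: "x \<in> {3,4,5}"
    then have "x \<notin> h ` level k" using bottom by fastforce
    then show "x \<in> h ` level (Suc k)" using onto[of x] x unfolding crown6_carrier_def by blast
  qed
  moreover have "h ` level k \<subseteq> {0,1,2}" "h ` level (Suc k) \<subseteq> {3,4,5}"
    using bottom top by (simp_all add: image_subset_iff)
  ultimately show ?thesis using I that subset_antisym by metis
qed

lemma card_level:
  assumes "k \<le> n"
  shows "card (level k) = 3"
proof -
  have card_eq: "card (level j') = card (h ` level j')"
    if "poset_iso_via (level j \<union> level (Suc j)) lt crown6_carrier crown6_lt h g" "j' \<in> {j, Suc j}"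
    for j j' h g
  proof -
    have "inj_on h (level j \<union> level (Suc j))"
      using that(1) unfolding poset_iso_via_def by (metis inj_on_inverseI)
    then have "inj_on h (level j')" by (rule inj_on_subset) (use that(2) in auto)
    then show ?thesis by (simp add: card_image)
  qed
  show ?thesis
  proof (cases "k < n")
    case True
    then obtain h g where "poset_iso_via (level k \<union> level (Suc k)) lt crown6_carrier crown6_lt h g"
      "h ` level k = {0,1,2}" by (rule level_crown_iso)
    then show ?thesis using card_eq[of k h g k] by simp
  next
    case False
    then have k: "k = Suc (n - 1)" "n - 1 < n" using assms height by auto
    obtain h g where "poset_iso_via (level (n - 1) \<union> level (Suc (n - 1))) lt crown6_carrier crown6_lt h g"
      "h ` level (Suc (n - 1)) = {3,4,5}" by (rule level_crown_iso[OF k(2)])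
    then show ?thesis using card_eq[of "n - 1" h g "Suc (n - 1)"] k(1) by simp
  qed
qed


lemma common_upper_cover:
  assumes k: "k < n" and ab: "a \<in> level k" "b \<in> level k" "a \<noteq> b"
  shows "\<exists>c\<in>level (Suc k). lt a c \<and> lt b c"
proof -
  obtain h g where I: "poset_iso_via (level k \<union> level (Suc k)) lt crown6_carrier crown6_lt h g"
    and bottom: "h ` level k = {0,1,2}"
    by (rule level_crown_iso[OF k])
  have "inj_on h (level k)" using poset_iso_viaD(6)[OF I] by (rule inj_on_subset) simp
  then have "h a \<noteq> h b" using inj_on_contraD ab by metis
  moreover have "h a \<in> {0,1,2}" "h b \<in> {0,1,2}" unfolding bottom[symmetric] using ab by simp_all
  ultimately obtain z where z: "z \<in> crown6_carrier" "crown6_lt (h a) z" "crown6_lt (h b) z"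
    using crown6_common_upper by metis
  have gz: "g z \<in> level k \<union> level (Suc k)" "h (g z) = z"
    using poset_iso_viaD(3,4)[OF I z(1)] by simp_all
  moreover have "z \<notin> h ` level k" using bottom crown6_lt_range[OF z(2)] by auto
  ultimately have "g z \<in> level (Suc k)" by (metis UnE image_eqI)
  moreover have "lt a (g z)" "lt b (g z)"
    using poset_iso_viaD(5)[OF I, of _ "g z"] gz z ab by auto
  ultimately show ?thesis by blast
qed

lemma no_common_upper_of_three:
  assumes k: "k < n" and abd: "a \<in> level k" "b \<in> level k" "d \<in> level k" "a \<noteq> b" "a \<noteq> d" "b \<noteq> d"
    and c: "c \<in> level (Suc k)"
  shows "\<not> (lt a c \<and> lt b c \<and> lt d c)"
proof -
  obtain h g where I: "poset_iso_via (level k \<union> level (Suc k)) lt crown6_carrier crown6_lt h g"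
    and bottom: "h ` level k = {0,1,2}"
    by (rule level_crown_iso[OF k])
  have inj: "inj_on h (level k)" using poset_iso_viaD(6)[OF I] by (rule inj_on_subset) simp
  have "h a \<in> {0,1,2}" "h b \<in> {0,1,2}" "h d \<in> {0,1,2}" unfolding bottom[symmetric] using abd by simp_all
  moreover have "h a \<noteq> h b" "h a \<noteq> h d" "h b \<noteq> h d" using inj_on_contraD[OF inj] abd by metis+
  ultimately have "\<not> (crown6_lt (h a) (h c) \<and> crown6_lt (h b) (h c) \<and> crown6_lt (h d) (h c))"
    by (rule crown6_no_common_upper_of_three)
  then show ?thesis using poset_iso_viaD(5)[OF I] abd c by auto
qed

text \<open>The element labelled i on level k+1 is a common upper cover of those labelled i and
  i - 1 (mod 3) on level k; the crown structure makes each labelling a bijection onto its level.\<close>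

primrec label :: "nat \<Rightarrow> nat \<Rightarrow> 'a" where
  "label 0 = (SOME e. bij_betw e {0..2} (level 0))"
| "label (Suc k) = (\<lambda>i. SOME c. c \<in> level (Suc k) \<and> lt (label k i) c \<and> lt (label k ((i + 2) mod 3)) c)"

declare label.simps(2)[simp del]

lemma label_Suc:
  assumes k: "k < n" and B: "bij_betw (label k) {0..2} (level k)" and i: "i \<le> 2"
  shows "label (Suc k) i \<in> level (Suc k)" and "lt (label k i) (label (Suc k) i)"
    and "lt (label k ((i + 2) mod 3)) (label (Suc k) i)"
proof -
  have "i = 0 \<or> i = 1 \<or> i = 2" using i by auto
  then have i': "(i + 2) mod 3 \<le> 2" "(i + 2) mod 3 \<noteq> i" by (elim disjE; simp)+
  have "label k i \<in> level k" "label k ((i + 2) mod 3) \<in> level k"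
    using bij_betwE[OF B] i i'(1) by auto
  moreover have "label k i \<noteq> label k ((i + 2) mod 3)"
    using B i i' unfolding bij_betw_def inj_on_def by (metis atLeastAtMost_iff zero_le)
  ultimately have "\<exists>c. c \<in> level (Suc k) \<and> lt (label k i) c \<and> lt (label k ((i + 2) mod 3)) c"
    using common_upper_cover[OF k] by blast
  then have "label (Suc k) i \<in> level (Suc k) \<and> lt (label k i) (label (Suc k) i) \<and>
      lt (label k ((i + 2) mod 3)) (label (Suc k) i)"
    unfolding label.simps by (rule someI_ex)
  then show "label (Suc k) i \<in> level (Suc k)" "lt (label k i) (label (Suc k) i)"
    "lt (label k ((i + 2) mod 3)) (label (Suc k) i)" by simp_all
qed

lemma not_above_all_labels:
  assumes k: "k < n" and B: "bij_betw (label k) {0..2} (level k)" and c: "c \<in> level (Suc k)"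
  shows "\<not> (lt (label k 0) c \<and> lt (label k 1) c \<and> lt (label k 2) c)"
proof -
  have "label k 0 \<in> level k" "label k 1 \<in> level k" "label k 2 \<in> level k"
    using B bij_betwE by fastforce+
  moreover have "label k a \<noteq> label k b" if "a \<le> 2" "b \<le> 2" "a \<noteq> b" for a b
    using B that unfolding bij_betw_def inj_on_def by auto
  then have "label k 0 \<noteq> label k 1" "label k 0 \<noteq> label k 2" "label k 1 \<noteq> label k 2" by auto
  ultimately show ?thesis using no_common_upper_of_three[OF k _ _ _ _ _ _ c] by blast
qed

lemma bij_label_Suc:
  assumes k: "k < n" and B: "bij_betw (label k) {0..2} (level k)"
  shows "bij_betw (label (Suc k)) {0..2} (level (Suc k))"
proof -
  have inj: "inj_on (label (Suc k)) {0..2}"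
  proof (rule inj_onI, rule ccontr)
    fix i j assume ij: "i \<in> {0..2::nat}" "j \<in> {0..2::nat}" "label (Suc k) i = label (Suc k) j" "i \<noteq> j"
    define c where "c = label (Suc k) i"
    have "c \<in> level (Suc k)" using label_Suc(1)[OF k B] ij unfolding c_def by auto
    moreover have "lt (label k i) c" "lt (label k ((i + 2) mod 3)) c" "lt (label k j) c"
      "lt (label k ((j + 2) mod 3)) c"
      using label_Suc(2,3)[OF k B, of i] label_Suc(2,3)[OF k B, of j] ij unfolding c_def by auto
    moreover have "i = 0 \<or> i = 1 \<or> i = 2" "j = 0 \<or> j = 1 \<or> j = 2" using ij by auto
    ultimately show False
      using ij(4) not_above_all_labels[OF k B] by (elim disjE) (simp_all add: numeral_2_eq_2)
  qed
  have "label (Suc k) ` {0..2} = level (Suc k)"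
  proof (rule card_seteq)
    show "finite (level (Suc k))" using finite_subset[OF level_subset is_posetD(1)[OF poset]] .
    show "label (Suc k) ` {0..2} \<subseteq> level (Suc k)" using label_Suc(1)[OF k B] by auto
    show "card (level (Suc k)) \<le> card (label (Suc k) ` {0..2})"
      using card_level[of "Suc k"] k inj by (simp add: card_image)
  qed
  then show ?thesis using inj unfolding bij_betw_def by blast
qed

lemma bij_label: "k \<le> n \<Longrightarrow> bij_betw (label k) {0..2} (level k)"
proof (induction k)
  case 0
  have "finite (level 0)" using finite_subset[OF level_subset is_posetD(1)[OF poset]] .
  then have "\<exists>e. bij_betw e {0..2::nat} (level 0)"
    using card_level[of 0] by (intro finite_same_card_bij) auto
  then show ?case unfolding label.simps by (rule someI_ex)
next
  case (Suc k)
  then show ?case using bij_label_Suc by simp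
qed


lemma label_in_level: "k \<le> n \<Longrightarrow> i \<le> 2 \<Longrightarrow> label k i \<in> level k"
  using bij_label bij_betwE by fastforce

lemma label_cover_iff:
  assumes k: "k < n" and i: "i \<le> 2" and j: "j \<le> 2"
  shows "lt (label k i) (label (Suc k) j) \<longleftrightarrow> j = i \<or> j = (i + 1) mod 3"
proof -
  have B: "bij_betw (label k) {0..2} (level k)" using bij_label k by simp
  have "\<not> (lt (label k 0) (label (Suc k) j) \<and> lt (label k 1) (label (Suc k) j) \<and>
      lt (label k 2) (label (Suc k) j))"
    using not_above_all_labels[OF k B label_Suc(1)[OF k B j]] .
  moreover have "lt (label k j) (label (Suc k) j)" "lt (label k ((j + 2) mod 3)) (label (Suc k) j)"
    using label_Suc(2,3)[OF k B j] by simp_all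
  moreover have "i = 0 \<or> i = 1 \<or> i = 2" "j = 0 \<or> j = 1 \<or> j = 2" using i j by auto
  ultimately show ?thesis by (elim disjE) (simp_all add: numeral_2_eq_2)
qed

lemma label_lt_two_levels:
  assumes k: "k + 2 \<le> n" and i: "i \<le> 2" and j: "j \<le> 2"
  shows "lt (label k i) (label (k + 2) j)"
proof -
  define m where "m = (if j = (i + 2) mod 3 then (i + 1) mod 3 else i)"
  have "i = 0 \<or> i = 1 \<or> i = 2" "j = 0 \<or> j = 1 \<or> j = 2" using i j by auto
  then have m: "m \<le> 2" "m = i \<or> m = (i + 1) mod 3" "j = m \<or> j = (m + 1) mod 3"
    unfolding m_def by (elim disjE; simp)+
  have le: "k < n" "Suc k < n" "Suc (Suc k) \<le> n" using k by auto
  have "lt (label k i) (label (Suc k) m)" using label_cover_iff[OF le(1) i m(1)] m(2) by blast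
  moreover have "lt (label (Suc k) m) (label (Suc (Suc k)) j)"
    using label_cover_iff[OF le(2) m(1) j] m(3) by blast
  moreover have "label k i \<in> A" "label (Suc k) m \<in> A" "label (Suc (Suc k)) j \<in> A"
    using subsetD[OF level_subset label_in_level] le i j m(1) by simp_all
  ultimately have "lt (label k i) (label (Suc (Suc k)) j)" using is_posetD(3)[OF poset] by blast
  then show ?thesis by simp
qed

lemma label_lt_distant:
  assumes "2 \<le> d" "k + d \<le> n" "i \<le> 2" "j \<le> 2"
  shows "lt (label k i) (label (k + d) j)"
  using assms
proof (induction d arbitrary: k rule: nat_induct_at_least)
  case base
  then show ?case using label_lt_two_levels by blast
next
  case (Suc d)
  have le: "k < n" "Suc k + d \<le> n" using Suc.prems by simp_all
  have "lt (label k i) (label (Suc k) i)" using label_cover_iff[OF le(1) Suc.prems(2,2)] by simp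
  moreover have "lt (label (Suc k) i) (label (Suc k + d) j)" using Suc.IH[OF le(2) Suc.prems(2,3)] .
  moreover have "label k i \<in> A" "label (Suc k) i \<in> A" "label (Suc k + d) j \<in> A"
    using subsetD[OF level_subset label_in_level] le Suc.prems(2,3) by simp_all
  ultimately have "lt (label k i) (label (Suc k + d) j)" using is_posetD(3)[OF poset] by blast
  then show ?case by simp
qed

lemma prank_label: "k \<le> n \<Longrightarrow> i \<le> 2 \<Longrightarrow> prank A lt (label k i) = k"
  using label_in_level[of k i] unfolding level_def by simp

lemma label_lt_iff:
  assumes "i \<le> 2" "k \<le> n" "j \<le> 2" "l \<le> n"
  shows "lt (label k i) (label l j) \<longleftrightarrow> stack_lt (i, k) (j, l)"
proof
  assume lt: "lt (label k i) (label l j)"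
  have "label k i \<in> A" "label l j \<in> A" using subsetD[OF level_subset label_in_level] assms by simp_all
  then have "k < l" using prank_less[OF poset _ _ lt] prank_label assms by simp
  moreover have "j = i \<or> j = (i + 1) mod 3" if "l = Suc k"
    using lt label_cover_iff[of k i j] assms that by simp
  ultimately show "stack_lt (i, k) (j, l)" unfolding stack_lt_def by fastforce
next
  assume st: "stack_lt (i, k) (j, l)"
  then have "k < l" unfolding stack_lt_def by simp
  show "lt (label k i) (label l j)"
  proof (cases "l = Suc k")
    case True
    then have "j = i \<or> j = (i + 1) mod 3" using st unfolding stack_lt_def by simp
    then show ?thesis using label_cover_iff[of k i j] assms True by simp
  next
    case False
    then show ?thesis using label_lt_distant[of "l - k" k i j] \<open>k < l\<close> assms by simp
  qed
qed

lemma stack_lt_iso: "poset_iso ({0..2} \<times> {0..n}) stack_lt A lt"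
  unfolding poset_iso_def
proof (intro exI[of _ "\<lambda>(i, k). label k i"] conjI ballI)
  show "bij_betw (\<lambda>(i, k). label k i) ({0..2} \<times> {0..n}) A"
    unfolding bij_betw_def
  proof
    show "inj_on (\<lambda>(i, k). label k i) ({0..2} \<times> {0..n})"
    proof (rule inj_onI, clarsimp)
      fix i k j l assume "i \<le> (2::nat)" "k \<le> n" "j \<le> 2" "l \<le> n" and eq: "label k i = label l j"
      moreover from this have "k = l" using prank_label by metis
      moreover have "inj_on (label k) {0..2}" using bij_label[of k] \<open>k \<le> n\<close> unfolding bij_betw_def by blast
      ultimately show "i = j \<and> k = l" using inj_onD[of "label k" "{0..2}" i j] by simp
    qed
    show "(\<lambda>(i, k). label k i) ` ({0..2} \<times> {0..n}) = A"
    proof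
      show "(\<lambda>(i, k). label k i) ` ({0..2} \<times> {0..n}) \<subseteq> A"
        using subsetD[OF level_subset label_in_level] by auto
      show "A \<subseteq> (\<lambda>(i, k). label k i) ` ({0..2} \<times> {0..n})"
      proof
        fix x assume x: "x \<in> A"
        define k where "k = prank A lt x"
        then have k: "k \<le> n" "x \<in> level k" using prank_le_rank[OF poset ranked x] x unfolding level_def by auto
        have "x \<in> label k ` {0..2}" using bij_label[OF k(1)] k(2) unfolding bij_betw_def by simp
        then obtain i where "i \<in> {0..2}" "x = label k i" by blast
        then show "x \<in> (\<lambda>(i, k). label k i) ` ({0..2} \<times> {0..n})"
          using k(1) by (intro image_eqI[of _ _ "(i, k)"]) auto
      qed
    qed
  qed
next
  fix p q :: "nat \<times> nat" assume "p \<in> {0..2} \<times> {0..n}" "q \<in> {0..2} \<times> {0..n}"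
  then obtain i k j l where "p = (i, k)" "q = (j, l)" "i \<le> 2" "k \<le> n" "j \<le> 2" "l \<le> n" by auto
  then show "stack_lt p q \<longleftrightarrow> lt ((\<lambda>(i, k). label k i) p) ((\<lambda>(i, k). label k i) q)"
    using label_lt_iff by simp
qed

end

lemma six_stack_nice_section:
  assumes "is_poset A lt" and "six_stack A lt"
  shows "\<exists>B R. nice_section B R \<and> poset_iso B R A lt"
proof -
  obtain n where n: "n \<ge> 1" "ranked_of A lt n"
    "\<forall>k<n. poset_iso (rank_slice A lt k (Suc k)) lt crown6_carrier crown6_lt"
    using assms(2) unfolding six_stack_def by blast
  then interpret crown_stack A lt n using assms(1) by unfold_locales
  have "nice_section ({0..2} \<times> {0..n}) stack_lt"
    unfolding nice_section_def using is_section_stack_lt[OF n(1)] is_nice_stack_lt by simp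
  with stack_lt_iso show ?thesis by blast
qed

lemma two_antichain_nice_section:
  assumes "two_antichain A lt"
  shows "\<exists>B R. nice_section B R \<and> poset_iso B R A lt"
proof -
  obtain a b where ab: "A = {a, b}" "a \<noteq> b" using assms unfolding two_antichain_def by (meson card_2_iff)
  let ?B = "{(0, 0), (1, 0)} :: (nat \<times> nat) set" and ?R = "\<lambda>_ _ :: nat \<times> nat. False"
  have "two_antichain ?B ?R" "is_poset ?B ?R" unfolding two_antichain_def is_poset_def by simp_all
  moreover have "is_nice ?B ?R" unfolding is_nice_def by simp
  ultimately have "nice_section ?B ?R" unfolding nice_section_def is_section_iff by blast
  moreover have "poset_iso ?B ?R A lt"
    unfolding poset_iso_def
  proof (intro exI[of _ "\<lambda>p. if p = (0, 0) then a else b"] conjI)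
    show "bij_betw (\<lambda>p. if p = (0, 0) then a else b) ?B A"
      unfolding bij_betw_def inj_on_def using ab by auto
    show "\<forall>x\<in>?B. \<forall>y\<in>?B. ?R x y \<longleftrightarrow> lt (if x = (0, 0) then a else b) (if y = (0, 0) then a else b)"
      using assms ab unfolding two_antichain_def by auto
  qed
  ultimately show ?thesis by blast
qed

section \<open>Towers\<close>

lemma nice_section_nonempty:
  assumes "nice_section B R"
  shows "finite B \<and> B \<noteq> {}"
proof
  have poset: "is_poset B R" and shape: "two_antichain B R \<or> (\<exists>n. grid_section B R n)"
    using assms unfolding nice_section_def is_section_iff by simp_all
  show "finite B" using poset by (rule is_posetD(1))
  show "B \<noteq> {}"
    using shape
  proof (elim disjE exE)
    assume "two_antichain B R"
    then show ?thesis unfolding two_antichain_def by auto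
  next
    fix n assume "grid_section B R n"
    then show ?thesis using grid_section.carrier by fastforce
  qed

qed

lemma six_tower_of_nice_section_tower:
  assumes P: "is_poset A lt" and R: "ranked A lt"
    and Ss: "Ss \<noteq> []" "\<forall>S\<in>set Ss. nice_section (fst S) (snd S)"
    and I: "poset_iso (osum_carrier Ss) (osum_lt Ss) A lt"
  shows "six_tower A lt"
proof -
  obtain f g where f: "poset_iso_via (osum_carrier Ss) (osum_lt Ss) A lt f g"
    using I poset_iso_iff_via by blast
  define Ps where "Ps = map (\<lambda>j. (f ` Pair j ` fst (Ss!j), lt)) [0..<length Ss]"
  have len: "length Ps = length Ss" unfolding Ps_def by simp
  have piece_iso: "poset_iso (fst (Ss!j)) (snd (Ss!j)) (fst (Ps!j)) (snd (Ps!j))"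
    and piece_sub: "fst (Ps!j) \<subseteq> A" if j: "j < length Ss" for j
  proof -
    have sub: "Pair j ` fst (Ss!j) \<subseteq> osum_carrier Ss" using j unfolding osum_carrier_def by auto
    have "poset_iso (Pair j ` fst (Ss!j)) (osum_lt Ss) (f ` Pair j ` fst (Ss!j)) lt"
      using poset_iso_via_restrict[OF f sub] poset_iso_iff_via by blast
    then show "poset_iso (fst (Ss!j)) (snd (Ss!j)) (fst (Ps!j)) (snd (Ps!j))"
      using poset_iso_trans[OF osum_summand_iso[OF j]] j unfolding Ps_def by simp
    show "fst (Ps!j) \<subseteq> A" using sub poset_iso_viaD(1)[OF f] j unfolding Ps_def by auto
  qed
  have "\<forall>S\<in>set Ss. finite (fst S) \<and> fst S \<noteq> {}" using Ss(2) nice_section_nonempty by blast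
  then have ranked_piece: "ranked (fst (Ss!j)) (snd (Ss!j))" if "j < length Ss" for j
    using ranked_summand[OF ranked_iso[OF poset_iso_sym[OF I] R]] that by simp
  show ?thesis
    unfolding six_tower_def
  proof (intro exI[of _ Ps] conjI ballI)
    show "Ps \<noteq> []" using Ss(1) len by auto
    fix p assume "p \<in> set Ps"
    then obtain j where j: "j < length Ss" "p = Ps!j" using len by (metis in_set_conv_nth)
    show "is_poset (fst p) (snd p)"
      using is_poset_subset[OF P piece_sub[OF j(1)]] j unfolding Ps_def by simp
    have "two_antichain (fst (Ss!j)) (snd (Ss!j)) \<or> six_stack (fst (Ss!j)) (snd (Ss!j))"
      using nice_section_cases Ss(2) ranked_piece j(1) by simp
    then show "two_antichain (fst p) (snd p) \<or> six_stack (fst p) (snd p)"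
      using two_antichain_iso[OF piece_iso[OF j(1)]] six_stack_iso[OF piece_iso[OF j(1)]] j(2) by blast
  next
    show "poset_iso A lt (osum_carrier Ps) (osum_lt Ps)"
      using poset_iso_trans[OF poset_iso_sym[OF I] osum_iso[OF len]] piece_iso by simp
  qed
qed

lemma nice_section_tower_of_six_tower:
  assumes "six_tower A lt"
  shows "\<exists>Ss. Ss \<noteq> [] \<and> (\<forall>S\<in>set Ss. nice_section (fst S) (snd S)) \<and>
    poset_iso (osum_carrier Ss) (osum_lt Ss) A lt"
proof -
  obtain Ps :: "('a set \<times> ('a \<Rightarrow> 'a \<Rightarrow> bool)) list" where Ps: "Ps \<noteq> []"
    "\<forall>P\<in>set Ps. is_poset (fst P) (snd P) \<and> (two_antichain (fst P) (snd P) \<or> six_stack (fst P) (snd P))"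
    "poset_iso A lt (osum_carrier Ps) (osum_lt Ps)"
    using assms unfolding six_tower_def by blast
  have "\<exists>S. nice_section (fst S) (snd S) \<and> poset_iso (fst S) (snd S) (fst P) (snd P)"
    if "P \<in> set Ps" for P
  proof -
    have "two_antichain (fst P) (snd P) \<or> six_stack (fst P) (snd P)" and "is_poset (fst P) (snd P)"
      using Ps(2) that by simp_all
    then obtain B R where "nice_section B R" "poset_iso B R (fst P) (snd P)"
      using two_antichain_nice_section six_stack_nice_section by blast
    then show ?thesis by (intro exI[of _ "(B, R)"]) simp
  qed
  then obtain S where S: "\<And>P. P \<in> set Ps \<Longrightarrow> nice_section (fst (S P)) (snd (S P)) \<and>
      poset_iso (fst (S P)) (snd (S P)) (fst P) (snd P)"
    by metis
  have "poset_iso (osum_carrier (map S Ps)) (osum_lt (map S Ps)) (osum_carrier Ps) (osum_lt Ps)"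
    by (rule osum_iso) (use S in simp_all)
  then have "poset_iso (osum_carrier (map S Ps)) (osum_lt (map S Ps)) A lt"
    using poset_iso_trans poset_iso_sym[OF Ps(3)] by blast
  moreover have "\<forall>S'\<in>set (map S Ps). nice_section (fst S') (snd S')" using S by simp
  ultimately show ?thesis using Ps(1) by (intro exI[of _ "map S Ps"]) simp
qed

theorem proposition4p2:
  fixes A :: "'a set" and lt :: "'a \<Rightarrow> 'a \<Rightarrow> bool"
  assumes "is_poset A lt" and "ranked A lt"
  shows "((\<exists>B R. nice_section B R \<and> poset_iso B R A lt) \<longleftrightarrow>
            (two_antichain A lt \<or> six_stack A lt))
       \<and> ((\<exists>Ss. Ss \<noteq> [] \<and> (\<forall>S\<in>set Ss. nice_section (fst S) (snd S)) \<and>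
              poset_iso (osum_carrier Ss) (osum_lt Ss) A lt) \<longleftrightarrow>
            six_tower A lt)"
proof (intro conjI iffI)
  assume "\<exists>B R. nice_section B R \<and> poset_iso B R A lt"
  then obtain B R where BR: "nice_section B R" "poset_iso B R A lt" by blast
  then have "two_antichain B R \<or> six_stack B R"
    using nice_section_cases[OF BR(1) ranked_iso[OF poset_iso_sym[OF BR(2)] assms(2)]] by blast
  then show "two_antichain A lt \<or> six_stack A lt"
    using two_antichain_iso[OF BR(2)] six_stack_iso[OF BR(2)] by blast
next
  assume "two_antichain A lt \<or> six_stack A lt"
  then show "\<exists>B R. nice_section B R \<and> poset_iso B R A lt"
    using two_antichain_nice_section six_stack_nice_section[OF assms(1)] by (elim disjE)
next
  assume "\<exists>Ss. Ss \<noteq> [] \<and> (\<forall>S\<in>set Ss. nice_section (fst S) (snd S)) \<and>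
      poset_iso (osum_carrier Ss) (osum_lt Ss) A lt"
  then show "six_tower A lt" using six_tower_of_nice_section_tower[OF assms] by blast
qed (rule nice_section_tower_of_six_tower)

end
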